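(* Let $A\in\mathbb{C}^{n\times n}$, and let $\mathcal{H}(A)=\tfrac12(A+A^{*})$ and $\mathcal{S}(A)=\tfrac12(A-A^{*})$. Then \[|\Lambda(A)|\leq \min\Big\{\big(\operatorname{rank}(\mathcal{H}(A))+1\big)\,|\Lambda(\mathcal{S}(A))|,\ \big(\operatorname{rank}(\mathcal{S}(A))+1\big)\,|\Lambda(\mathcal{H}(A))|\Big\}-d(A).\]
   Context: For $M\in\mathbb{C}^{n\times n}$, $\Lambda(M)$ denotes the set of distinct eigenvalues of $M$ and $|\cdot|$ the cardinality of a set; $A^{*}$ is the conjugate transpose. For $\lambda\in\Lambda(M)$, $m_a(M,\lambda)$ is its algebraic multiplicity and $m_g(M,\lambda)$ its geometric multiplicity. The defectivity of $M$ is $d(M):=\sum_{\lambda\in\Lambda(M)}\big(m_a(M,\lambda)-m_g(M,\lambda)\big)$. *)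

theory Defs
  imports "Jordan_Normal_Form.Jordan_Normal_Form_Uniqueness" "Jordan_Normal_Form.Schur_Decomposition"
    "Jordan_Normal_Form.DL_Rank"
begin

definition eigvals :: "complex mat \<Rightarrow> complex set" where
  "eigvals M = {z. eigenvalue M z}"

definition alg_mult :: "complex mat \<Rightarrow> complex \<Rightarrow> nat" where
  "alg_mult M z = Polynomial.order z (char_poly M)"

definition geo_mult :: "complex mat \<Rightarrow> complex \<Rightarrow> nat" where
  "geo_mult M z = kernel_dim (M - z \<cdot>\<^sub>m 1\<^sub>m (dim_row M))"

definition defectivity :: "complex mat \<Rightarrow> nat" where
  "defectivity M = (\<Sum>z\<in>eigvals M. alg_mult M z - geo_mult M z)"

definition herm_part :: "complex mat \<Rightarrow> complex mat" where
  "herm_part A = (1/2) \<cdot>\<^sub>m (A + mat_adjoint A)"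

definition skew_part :: "complex mat \<Rightarrow> complex mat" where
  "skew_part A = (1/2) \<cdot>\<^sub>m (A - mat_adjoint A)"

definition mrank :: "complex mat \<Rightarrow> nat" where
  "mrank M = vec_space.rank (dim_row M) M"

end

(*
  Write A = B + E where B is the Hermitian or the skew-Hermitian part, hence diagonalizable, and E is
  the other part. Subadditivity of rank gives, for every \<mu>, dim ker (B - \<mu>) \<le> dim ker (A - \<mu>) + rank E.
  Summing over \<Lambda>(B), where the left-hand sides add up to n, and dropping the terms with \<mu> \<notin> \<Lambda>(A) yields
  n \<le> \<Sum>_{\<mu> \<in> \<Lambda>(A) \<inter> \<Lambda>(B)} m_g(A,\<mu>) + |\<Lambda>(B)| rank E.  On the other hand
  n = d(A) + \<Sum>_{\<mu> \<in> \<Lambda>(A)} m_g(A,\<mu>) with every m_g(A,\<mu>) \<ge> 1, so |\<Lambda>(A)| + d(A) \<le> (rank E + 1) |\<Lambda>(B)|.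
*)
theory Submission
  imports Defs "Jordan_Normal_Form.Jordan_Normal_Form_Existence"
begin

lemma kernel_dim_add_rank:
  fixes X :: "'a::field mat"
  assumes X: "X \<in> carrier_mat n n"
  shows "kernel_dim X + vec_space.rank n X = n"
proof -
  interpret V: vec_space "TYPE('a)" n .
  interpret K: kernel n n X by (unfold_locales, rule X)
  have hom: "(\<lambda>v. X *\<^sub>v v) \<in> module_hom class_ring V.V V.V"
    unfolding module_hom_def using X
    by (auto simp: mult_add_distrib_mat_vec mult_mat_vec)
  interpret L: linear_map class_ring V.V V.V "\<lambda>v. X *\<^sub>v v"
    by (intro linear_map.intro mod_hom.intro mod_hom_axioms.intro hom; unfold_locales)
  have ker: "L.kerT = mat_kernel X"
    unfolding mod_hom.ker_def[OF L.mod_hom_axioms] mat_kernel_def using X by auto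
  have im: "L.imT = V.span (set (cols X))"
    using V.col_space_eq[OF X] X
    unfolding mod_hom.im_def[OF L.mod_hom_axioms] V.col_space_def by auto
  have "vectorspace.dim class_ring (V.vs L.imT) + vectorspace.dim class_ring (V.vs L.kerT) = V.dim"
    by (rule L.rank_nullity) simp
  then show ?thesis unfolding ker im V.rank_def K.kernel_dim V.dim_is_n by simp
qed

lemma kernel_dim_le_kernel_dim_add_rank:
  fixes N M :: "'a::field mat"
  assumes N: "N \<in> carrier_mat n n" and M: "M \<in> carrier_mat n n"
  shows "kernel_dim N \<le> kernel_dim (N + M) + vec_space.rank n M"
proof -
  have "vec_space.rank n (N + M) \<le> vec_space.rank n N + vec_space.rank n M"
    by (rule vec_space.rank_subadditive[OF N M])
  moreover have "kernel_dim N + vec_space.rank n N = n"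
    by (rule kernel_dim_add_rank[OF N])
  moreover have "kernel_dim (N + M) + vec_space.rank n (N + M) = n"
    by (rule kernel_dim_add_rank) (use N M in auto)
  ultimately show ?thesis by linarith
qed

lemma kernel_dim_cong:
  fixes M1 M2 :: "'a::field mat"
  assumes "M1 \<in> carrier_mat n n" "M2 \<in> carrier_mat n n" "mat_kernel M1 = mat_kernel M2"
  shows "kernel_dim M1 = kernel_dim M2"
proof -
  interpret K1: kernel n n M1 by (unfold_locales, rule assms(1))
  interpret K2: kernel n n M2 by (unfold_locales, rule assms(2))
  show ?thesis unfolding K1.kernel_dim K2.kernel_dim assms(3) ..
qed

lemma order_prod_linear_factors:
  "Polynomial.order x (\<Prod>a\<leftarrow>as. [:- a, 1:]) = count_list as (x::'a::idom)"
proof (induct as)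
  case (Cons a as)
  have "[:- a, 1:] * (\<Prod>a\<leftarrow>as. [:- a, 1:]) \<noteq> 0"
    by (rule no_zero_divisors) (auto simp: prod_list_zero_iff)
  from order_mult[OF this, of x] show ?case using Cons order_linear'[of x "-a"] by auto
qed simp

lemma eigvals_char_poly_roots:
  assumes A: "A \<in> carrier_mat n n"
  obtains as where "length as = n" "eigvals A = set as" "\<And>x. alg_mult A x = count_list as x"
proof -
  obtain as where cp: "char_poly A = (\<Prod>a\<leftarrow>as. [:- a, 1:])" and "length as = n"
    using char_poly_factorized[OF A] by blast
  moreover have "alg_mult A x = count_list as x" for x
    unfolding alg_mult_def cp order_prod_linear_factors ..
  moreover have "eigvals A = set as"
    unfolding eigvals_def eigenvalue_root_char_poly[OF A] cp
    by (auto simp: poly_prod_list_zero_iff)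
  ultimately show ?thesis using that by blast
qed

lemma finite_eigvals: "A \<in> carrier_mat n n \<Longrightarrow> finite (eigvals A)"
  by (metis eigvals_char_poly_roots finite_set)

lemma sum_alg_mult_eigvals:
  assumes "A \<in> carrier_mat n n"
  shows "(\<Sum>x\<in>eigvals A. alg_mult A x) = n"
proof -
  obtain as where "length as = n" "eigvals A = set as" "\<And>x. alg_mult A x = count_list as x"
    using eigvals_char_poly_roots[OF assms] by blast
  then show ?thesis using sum_count_set[of as "set as"] by simp
qed

lemma alg_mult_pos_iff_eigenvalue:
  assumes "A \<in> carrier_mat n n"
  shows "0 < alg_mult A x \<longleftrightarrow> x \<in> eigvals A"
  using eigvals_char_poly_roots[OF assms] by (metis count_list_0_iff neq0_conv)

lemma geo_mult_eq_dim_gen_eigenspace: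
  assumes "A \<in> carrier_mat n n"
  shows "geo_mult A x = dim_gen_eigenspace A x 1"
proof -
  have "A - x \<cdot>\<^sub>m 1\<^sub>m (dim_row A) = char_matrix A x"
    unfolding char_matrix_def using assms by (intro eq_matI) auto
  then show ?thesis unfolding geo_mult_def dim_gen_eigenspace_def using assms by simp
qed

lemma jordan_block_sizes:
  fixes A :: "complex mat"
  assumes A: "A \<in> carrier_mat n n"
  obtains ks where "alg_mult A x = sum_list ks" "geo_mult A x = (\<Sum>k\<leftarrow>ks. min 1 k)"
    "dim_gen_eigenspace A x 2 = (\<Sum>k\<leftarrow>ks. min 2 k)"
proof -
  obtain as where "char_poly A = (\<Prod>a\<leftarrow>as. [:- a, 1:])"
    using char_poly_factorized[OF A] by blast
  from jordan_nf_exists[OF A this] obtain n_as where jnf: "jordan_nf A n_as" ..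
  have "[(n, e)\<leftarrow>n_as . e = x] = filter (\<lambda>na. snd na = x) n_as"
    by (rule filter_cong) auto
  then show ?thesis
    using that[of "map fst [(n, e)\<leftarrow>n_as . e = x]"] jordan_nf_order[OF jnf, of x]
      dim_gen_eigenspace[OF jnf] geo_mult_eq_dim_gen_eigenspace[OF A]
    unfolding alg_mult_def by simp
qed

lemma sum_list_min_le: "(\<Sum>k\<leftarrow>ks. min m k) \<le> sum_list (ks :: nat list)"
  by (induct ks) auto

lemma sum_list_min_one_pos: "0 < sum_list (ks :: nat list) \<Longrightarrow> 0 < (\<Sum>k\<leftarrow>ks. min 1 k)"
  by (induct ks) auto

lemma sum_list_min_two_eq_min_one:
  "(\<Sum>k\<leftarrow>ks. min 2 k) = (\<Sum>k\<leftarrow>ks. min 1 k) \<Longrightarrow> (\<Sum>k\<leftarrow>ks. min 1 k) = sum_list (ks :: nat list)"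
proof (induct ks)
  case (Cons k ks)
  have "(\<Sum>k\<leftarrow>ks. min 1 k) \<le> (\<Sum>k\<leftarrow>ks. min 2 k)"
    by (rule sum_list_mono) simp
  with Cons.prems have "min 2 k = min 1 k"
    "(\<Sum>k\<leftarrow>ks. min 2 k) = (\<Sum>k\<leftarrow>ks. min 1 k)" by auto
  with Cons.hyps show ?case by (auto simp: min_def split: if_splits)
qed simp

lemma geo_mult_le_alg_mult:
  fixes A :: "complex mat"
  assumes "A \<in> carrier_mat n n"
  shows "geo_mult A x \<le> alg_mult A x"
  using jordan_block_sizes[OF assms, of x] sum_list_min_le by metis

lemma geo_mult_pos:
  fixes A :: "complex mat"
  assumes "A \<in> carrier_mat n n" "x \<in> eigvals A"
  shows "0 < geo_mult A x"
  using jordan_block_sizes[OF assms(1), of x] sum_list_min_one_pos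
    alg_mult_pos_iff_eigenvalue[OF assms(1)] assms(2) by metis

text \<open>Equal kernels of \<open>A - x I\<close> and \<open>(A - x I)\<^sup>2\<close> force every Jordan block of \<open>x\<close> to have size 1.\<close>

lemma geo_mult_eq_alg_mult_if_kernel_square:
  fixes A :: "complex mat"
  assumes A: "A \<in> carrier_mat n n"
    and ker: "mat_kernel (char_matrix A x * char_matrix A x) = mat_kernel (char_matrix A x)"
  shows "geo_mult A x = alg_mult A x"
proof -
  let ?N = "char_matrix A x"
  have N: "?N \<in> carrier_mat n n" using A by simp
  have "?N ^\<^sub>m 2 = ?N * ?N" "?N ^\<^sub>m 1 = ?N" using N by (simp_all add: numeral_2_eq_2)
  then have "dim_gen_eigenspace A x 2 = dim_gen_eigenspace A x 1"
    unfolding dim_gen_eigenspace_def using kernel_dim_cong[OF _ N ker] N by simp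
  with jordan_block_sizes[OF A, of x] show ?thesis
    using sum_list_min_two_eq_min_one geo_mult_eq_dim_gen_eigenspace[OF A] by metis
qed

lemma mat_adjoint_carrier_mat: "A \<in> carrier_mat n m \<Longrightarrow> mat_adjoint A \<in> carrier_mat m n"
  unfolding mat_adjoint_def by auto

lemma index_mat_adjoint:
  "A \<in> carrier_mat n m \<Longrightarrow> i < m \<Longrightarrow> j < n \<Longrightarrow> mat_adjoint A $$ (i, j) = conjugate (A $$ (j, i))"
  unfolding mat_adjoint_def by (auto simp: mat_of_rows_def)

lemma inner_mult_mat_vec_adjoint:
  fixes A :: "complex mat"
  assumes A: "A \<in> carrier_mat n m" and x: "x \<in> carrier_vec m" and y: "y \<in> carrier_vec n"
  shows "(A *\<^sub>v x) \<bullet>c y = x \<bullet>c (mat_adjoint A *\<^sub>v y)"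
proof -
  have "(A *\<^sub>v x) \<bullet>c y = (\<Sum>i<n. \<Sum>j<m. x $ j * (A $$ (i, j) * cnj (y $ i)))"
    using A x y by (simp add: scalar_prod_def sum_distrib_left lessThan_atLeast0 ac_simps)
  also have "\<dots> = (\<Sum>j<m. \<Sum>i<n. x $ j * (A $$ (i, j) * cnj (y $ i)))"
    by (rule sum.swap)
  also have "\<dots> = x \<bullet>c (mat_adjoint A *\<^sub>v y)"
    using A x y mat_adjoint_carrier_mat[OF A]
    by (simp add: scalar_prod_def sum_distrib_left lessThan_atLeast0 index_mat_adjoint cnj_sum)
  finally show ?thesis .
qed

lemma mult_mat_vec_smult_mat:
  "A \<in> carrier_mat n m \<Longrightarrow> v \<in> carrier_vec m \<Longrightarrow> (k \<cdot>\<^sub>m A) *\<^sub>v v = k \<cdot>\<^sub>v (A *\<^sub>v (v :: 'a :: comm_ring vec))"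
  by (intro eq_vecI) (auto simp: scalar_prod_def sum_distrib_left ac_simps)

lemma char_matrix_mult_vec:
  "A \<in> carrier_mat n n \<Longrightarrow> v \<in> carrier_vec n \<Longrightarrow> char_matrix A e *\<^sub>v v = A *\<^sub>v v + (- e) \<cdot>\<^sub>v v"
  unfolding char_matrix_def by (simp add: add_mult_distrib_mat_vec[of _ n n] mult_mat_vec_smult_mat[of _ n n])

text \<open>If \<open>w = (B - \<mu> I) v \<noteq> 0\<close> then \<open>w\<close> is an eigenvector, and the symmetry
  \<open>\<langle>B x, y\<rangle> = c \<langle>x, B y\<rangle>\<close> forces first \<open>\<mu> = c \<mu>\<^sup>*\<close>
  and then \<open>\<langle>w, w\<rangle> = (c \<mu>\<^sup>* - \<mu>) \<langle>v, w\<rangle> = 0\<close>.\<close>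

lemma char_matrix_mult_vec_eq_zero_if_square:
  fixes B :: "complex mat"
  assumes B: "B \<in> carrier_mat n n" and adj: "mat_adjoint B = c \<cdot>\<^sub>m B" and c: "cnj c = c"
    and v: "v \<in> carrier_vec n"
    and vv: "char_matrix B \<mu> *\<^sub>v (char_matrix B \<mu> *\<^sub>v v) = 0\<^sub>v n"
  shows "char_matrix B \<mu> *\<^sub>v v = 0\<^sub>v n"
proof (rule ccontr)
  define w where "w = char_matrix B \<mu> *\<^sub>v v"
  have w: "w \<in> carrier_vec n" unfolding w_def using B v by (simp add: mult_mat_vec_carrier[of _ n n])
  assume "char_matrix B \<mu> *\<^sub>v v \<noteq> 0\<^sub>v n"
  then have "eigenvector B w \<mu>"
    using eigenvector_char_matrix[OF B] w vv unfolding w_def by simp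
  then have Bw: "B *\<^sub>v w = \<mu> \<cdot>\<^sub>v w" unfolding eigenvector_def by simp
  have ww: "w \<bullet>c w \<noteq> 0" using \<open>eigenvector B w \<mu>\<close> w B unfolding eigenvector_def by simp
  have adjoint_swap: "(B *\<^sub>v x) \<bullet>c y = c * (x \<bullet>c (B *\<^sub>v y))"
    if "x \<in> carrier_vec n" "y \<in> carrier_vec n" for x y
    using that B c
    by (simp add: inner_mult_mat_vec_adjoint[OF B] adj mult_mat_vec_smult_mat conjugate_smult_vec)
  have "\<mu> * (w \<bullet>c w) = c * (cnj \<mu> * (w \<bullet>c w))"
    using adjoint_swap[OF w w] w unfolding Bw by (simp add: conjugate_smult_vec)
  with ww c have \<mu>: "\<mu> = c * cnj \<mu>" by simp
  have "w \<bullet>c w = (B *\<^sub>v v + (- \<mu>) \<cdot>\<^sub>v v) \<bullet>c w"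
    unfolding w_def using char_matrix_mult_vec[OF B v] by simp
  also have "\<dots> = (B *\<^sub>v v) \<bullet>c w - \<mu> * (v \<bullet>c w)"
    using B v w by (simp add: add_scalar_prod_distrib[of _ n])
  also have "\<dots> = 0"
    using adjoint_swap[OF v w] v w \<mu> unfolding Bw by (simp add: conjugate_smult_vec)
  finally show False using ww by simp
qed

lemma mat_kernel_char_matrix_square:
  fixes B :: "complex mat"
  assumes B: "B \<in> carrier_mat n n" and adj: "mat_adjoint B = c \<cdot>\<^sub>m B" and c: "cnj c = c"
  shows "mat_kernel (char_matrix B \<mu> * char_matrix B \<mu>) = mat_kernel (char_matrix B \<mu>)"
proof -
  let ?N = "char_matrix B \<mu>"
  have N: "?N \<in> carrier_mat n n" using B by simp
  have "?N * ?N \<in> carrier_mat n n" using N by simp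
  then have "v \<in> mat_kernel (?N * ?N) \<longleftrightarrow> v \<in> mat_kernel ?N" for v
    using N char_matrix_mult_vec_eq_zero_if_square[OF B adj c, of v \<mu>]
    by (auto simp: mat_kernel_def assoc_mult_mat_vec[of _ n n _ n])
  then show ?thesis by blast
qed

lemma geo_mult_eq_alg_mult_if_adjoint_smult:
  fixes B :: "complex mat"
  assumes B: "B \<in> carrier_mat n n" and "mat_adjoint B = c \<cdot>\<^sub>m B" and "cnj c = c"
  shows "geo_mult B \<mu> = alg_mult B \<mu>"
  using geo_mult_eq_alg_mult_if_kernel_square[OF B mat_kernel_char_matrix_square[OF assms]] .

lemma defectivity_add_sum_geo_mult:
  fixes A :: "complex mat"
  assumes A: "A \<in> carrier_mat n n"
  shows "defectivity A + (\<Sum>x\<in>eigvals A. geo_mult A x) = n"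
  unfolding defectivity_def sum.distrib[symmetric] sum_alg_mult_eigvals[OF A, symmetric]
  using geo_mult_le_alg_mult[OF A] by (intro sum.cong) auto

lemma card_eigvals_add_defectivity_le:
  fixes A :: "complex mat"
  assumes A: "A \<in> carrier_mat n n" and T: "T \<subseteq> eigvals A"
  shows "card (eigvals A) + defectivity A + (\<Sum>x\<in>T. geo_mult A x) \<le> card T + n"
proof -
  let ?U = "eigvals A - T"
  have fin: "finite T" "finite ?U" using finite_eigvals[OF A] T finite_subset by auto
  have split: "eigvals A = T \<union> ?U" "T \<inter> ?U = {}" using T by auto
  have "card ?U \<le> (\<Sum>x\<in>?U. geo_mult A x)"
    using sum_mono[of ?U "\<lambda>_. 1::nat" "geo_mult A"] geo_mult_pos[OF A] by (auto simp: Suc_le_eq)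
  moreover have "card (eigvals A) = card T + card ?U"
    using card_Un_disjoint[OF fin split(2)] split(1) by simp
  moreover have "(\<Sum>x\<in>eigvals A. geo_mult A x) = (\<Sum>x\<in>T. geo_mult A x) + (\<Sum>x\<in>?U. geo_mult A x)"
    using sum.union_disjoint[OF fin split(2)] split(1) by simp
  ultimately show ?thesis using defectivity_add_sum_geo_mult[OF A] by linarith
qed

lemma dim_le_sum_geo_mult_add_rank:
  fixes B E :: "complex mat"
  assumes B: "B \<in> carrier_mat n n" and E: "E \<in> carrier_mat n n"
    and diag: "\<And>\<mu>. geo_mult B \<mu> = alg_mult B \<mu>"
  shows "n \<le> (\<Sum>\<mu>\<in>eigvals (B + E) \<inter> eigvals B. geo_mult (B + E) \<mu>) + card (eigvals B) * mrank E"
proof -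
  let ?A = "B + E"
  have A: "?A \<in> carrier_mat n n" using B E by simp
  have geo_le: "geo_mult B \<mu> \<le> geo_mult ?A \<mu> + mrank E" for \<mu>
  proof -
    have "char_matrix ?A \<mu> = char_matrix B \<mu> + E"
      unfolding char_matrix_def using B E by (intro eq_matI) auto
    then show ?thesis
      using kernel_dim_le_kernel_dim_add_rank[of "char_matrix B \<mu>" n E] B E
      unfolding geo_mult_eq_dim_gen_eigenspace[OF A] geo_mult_eq_dim_gen_eigenspace[OF B]
        dim_gen_eigenspace_def mrank_def by simp
  qed
  have "n = (\<Sum>\<mu>\<in>eigvals B. geo_mult B \<mu>)" unfolding diag sum_alg_mult_eigvals[OF B] ..
  also have "\<dots> \<le> (\<Sum>\<mu>\<in>eigvals B. geo_mult ?A \<mu>) + card (eigvals B) * mrank E"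
    using sum_mono[of "eigvals B", OF geo_le] by (simp add: sum.distrib)
  also have "(\<Sum>\<mu>\<in>eigvals B. geo_mult ?A \<mu>) = (\<Sum>\<mu>\<in>eigvals ?A \<inter> eigvals B. geo_mult ?A \<mu>)"
  proof (rule sum.mono_neutral_right)
    show "\<forall>\<mu>\<in>eigvals B - eigvals ?A \<inter> eigvals B. geo_mult ?A \<mu> = 0"
      using geo_mult_le_alg_mult[OF A] alg_mult_pos_iff_eigenvalue[OF A] by (metis DiffE IntI le_zero_eq neq0_conv)
  qed (use finite_eigvals[OF B] in auto)
  finally show ?thesis .
qed

lemma card_eigvals_add_defectivity_le_perturbation:
  fixes B E :: "complex mat"
  assumes B: "B \<in> carrier_mat n n" and E: "E \<in> carrier_mat n n"
    and diag: "\<And>\<mu>. geo_mult B \<mu> = alg_mult B \<mu>"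
  shows "card (eigvals (B + E)) + defectivity (B + E) \<le> (mrank E + 1) * card (eigvals B)"
proof -
  let ?T = "eigvals (B + E) \<inter> eigvals B"
  have "card ?T \<le> card (eigvals B)" by (rule card_mono[OF finite_eigvals[OF B]]) auto
  then show ?thesis
    using card_eigvals_add_defectivity_le[of "B + E" n ?T] dim_le_sum_geo_mult_add_rank[OF B E diag] B E
    by (simp add: algebra_simps)
qed

lemma herm_part_carrier_mat: "A \<in> carrier_mat n n \<Longrightarrow> herm_part A \<in> carrier_mat n n"
  unfolding herm_part_def by (metis add_carrier_mat mat_adjoint_carrier_mat smult_carrier_mat)

lemma skew_part_carrier_mat: "A \<in> carrier_mat n n \<Longrightarrow> skew_part A \<in> carrier_mat n n"
  unfolding skew_part_def using mat_adjoint_carrier_mat by (metis minus_carrier_mat smult_carrier_mat)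

lemma index_herm_part:
  "A \<in> carrier_mat n n \<Longrightarrow> i < n \<Longrightarrow> j < n \<Longrightarrow> herm_part A $$ (i, j) = (A $$ (i, j) + cnj (A $$ (j, i))) / 2"
  unfolding herm_part_def using mat_adjoint_carrier_mat[of A n n] index_mat_adjoint[of A n n] by simp

lemma index_skew_part:
  "A \<in> carrier_mat n n \<Longrightarrow> i < n \<Longrightarrow> j < n \<Longrightarrow> skew_part A $$ (i, j) = (A $$ (i, j) - cnj (A $$ (j, i))) / 2"
  unfolding skew_part_def using mat_adjoint_carrier_mat[of A n n] index_mat_adjoint[of A n n] by simp

lemma mat_adjoint_herm_part:
  "A \<in> carrier_mat n n \<Longrightarrow> mat_adjoint (herm_part A) = 1 \<cdot>\<^sub>m herm_part A"
  using herm_part_carrier_mat[of A n] mat_adjoint_carrier_mat[of "herm_part A" n n]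
  by (intro eq_matI) (auto simp: index_mat_adjoint index_herm_part field_simps)

lemma mat_adjoint_skew_part:
  "A \<in> carrier_mat n n \<Longrightarrow> mat_adjoint (skew_part A) = (- 1) \<cdot>\<^sub>m skew_part A"
  using skew_part_carrier_mat[of A n] mat_adjoint_carrier_mat[of "skew_part A" n n]
  by (intro eq_matI) (auto simp: index_mat_adjoint index_skew_part field_simps)

lemma herm_part_add_skew_part:
  "A \<in> carrier_mat n n \<Longrightarrow> herm_part A + skew_part A = A"
  using herm_part_carrier_mat[of A n] skew_part_carrier_mat[of A n]
  by (intro eq_matI) (auto simp: index_herm_part index_skew_part field_simps)

theorem corollary4p4:
  fixes A :: "complex mat" and n :: nat
  assumes "A \<in> carrier_mat n n"
  shows "int (card (eigvals A)) \<le>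
    int (min ((mrank (herm_part A) + 1) * card (eigvals (skew_part A)))
             ((mrank (skew_part A) + 1) * card (eigvals (herm_part A))))
    - int (defectivity A)"
proof -
  let ?H = "herm_part A" and ?S = "skew_part A"
  have H: "?H \<in> carrier_mat n n" and S: "?S \<in> carrier_mat n n"
    using assms by (simp_all add: herm_part_carrier_mat skew_part_carrier_mat)
  have "A = ?H + ?S" "A = ?S + ?H"
    using herm_part_add_skew_part[OF assms] H S by (simp_all add: comm_add_mat[OF H S])
  moreover have "geo_mult ?H \<mu> = alg_mult ?H \<mu>" "geo_mult ?S \<mu> = alg_mult ?S \<mu>" for \<mu>
    using geo_mult_eq_alg_mult_if_adjoint_smult[OF H mat_adjoint_herm_part[OF assms]]
      geo_mult_eq_alg_mult_if_adjoint_smult[OF S mat_adjoint_skew_part[OF assms]] by simp_all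
  ultimately have "card (eigvals A) + defectivity A \<le> (mrank ?H + 1) * card (eigvals ?S)"
    "card (eigvals A) + defectivity A \<le> (mrank ?S + 1) * card (eigvals ?H)"
    using card_eigvals_add_defectivity_le_perturbation[OF S H]
      card_eigvals_add_defectivity_le_perturbation[OF H S] by metis+
  then show ?thesis by linarith
qed

end
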